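(* Let $(V,\langle\cdot\,,\cdot\rangle_V)$ be a nonzero neutral scalar product space, let $P$ be an isometric involution of $V$, and assume there are two anti-isometries $T_1,T_2\colon V\to V$ such that $T_1P=-PT_1$ and $T_2P=PT_2$. Then the eigenspaces $E_+=\{v:Pv=v\}$ and $E_-=\{v:Pv=-v\}$ of $P$ are non-trivial, and the restriction of $\langle\cdot\,,\cdot\rangle_V$ to each of $E_\pm$ is non-degenerate and neutral.
   Context: A scalar product is a real symmetric non-degenerate bilinear form on a finite-dimensional real vector space; it is neutral if the maximal dimensions of subspaces on which it is positive definite, respectively negative definite, coincide. An involution is a linear $P$ with $P^2=\mathrm{Id}_V$. A bijective linear map $T$ is an isometry if $\langle Tv,Tv\rangle_V=\langle v,v\rangle_V$ for all $v$, and an anti-isometry if $\langle Tv,Tv\rangle_V=-\langle v,v\rangle_V$ for all $v$. *)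

theory Defs
  imports "HOL-Analysis.Analysis"
begin

definition nondegenerate_on :: "('v::real_vector \<Rightarrow> 'v \<Rightarrow> real) \<Rightarrow> 'v set \<Rightarrow> bool" where
  "nondegenerate_on B W \<longleftrightarrow> (\<forall>w\<in>W. (\<forall>u\<in>W. B w u = 0) \<longrightarrow> w = 0)"

definition scalar_product :: "('v::real_vector \<Rightarrow> 'v \<Rightarrow> real) \<Rightarrow> bool" where
  "scalar_product B \<longleftrightarrow> bilinear B \<and> (\<forall>u v. B u v = B v u) \<and> nondegenerate_on B UNIV"

definition pos_definite_on :: "('v::real_vector \<Rightarrow> 'v \<Rightarrow> real) \<Rightarrow> 'v set \<Rightarrow> bool" where
  "pos_definite_on B U \<longleftrightarrow> (\<forall>u\<in>U. u \<noteq> 0 \<longrightarrow> B u u > 0)"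

definition neg_definite_on :: "('v::real_vector \<Rightarrow> 'v \<Rightarrow> real) \<Rightarrow> 'v set \<Rightarrow> bool" where
  "neg_definite_on B U \<longleftrightarrow> (\<forall>u\<in>U. u \<noteq> 0 \<longrightarrow> B u u < 0)"

definition max_pos_dim :: "('v::euclidean_space \<Rightarrow> 'v \<Rightarrow> real) \<Rightarrow> 'v set \<Rightarrow> nat" where
  "max_pos_dim B W = Max {dim U | U. subspace U \<and> U \<subseteq> W \<and> pos_definite_on B U}"

definition max_neg_dim :: "('v::euclidean_space \<Rightarrow> 'v \<Rightarrow> real) \<Rightarrow> 'v set \<Rightarrow> nat" where
  "max_neg_dim B W = Max {dim U | U. subspace U \<and> U \<subseteq> W \<and> neg_definite_on B U}"

definition neutral_on :: "('v::euclidean_space \<Rightarrow> 'v \<Rightarrow> real) \<Rightarrow> 'v set \<Rightarrow> bool" where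
  "neutral_on B W \<longleftrightarrow> max_pos_dim B W = max_neg_dim B W"

definition isometry :: "('v::real_vector \<Rightarrow> 'v \<Rightarrow> real) \<Rightarrow> ('v \<Rightarrow> 'v) \<Rightarrow> bool" where
  "isometry B T \<longleftrightarrow> linear T \<and> bij T \<and> (\<forall>v. B (T v) (T v) = B v v)"

definition anti_isometry :: "('v::real_vector \<Rightarrow> 'v \<Rightarrow> real) \<Rightarrow> ('v \<Rightarrow> 'v) \<Rightarrow> bool" where
  "anti_isometry B T \<longleftrightarrow> linear T \<and> bij T \<and> (\<forall>v. B (T v) (T v) = - B v v)"

definition involution :: "('v::real_vector \<Rightarrow> 'v) \<Rightarrow> bool" where
  "involution P \<longleftrightarrow> linear P \<and> (\<forall>v. P (P v) = v)"

end

theory Submission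
  imports Defs
begin

text \<open>
  An isometric involution \<open>P\<close> splits \<open>V\<close> into its eigenspaces \<open>E\<^sub>+\<close> and \<open>E\<^sub>-\<close>, and
  polarizing \<open>\<langle>P(u+w), P(u+w)\<rangle> = \<langle>u+w, u+w\<rangle>\<close> shows that they are orthogonal; hence a vector
  orthogonal to its own eigenspace is orthogonal to all of \<open>V\<close>, and non-degeneracy passes to
  \<open>E\<^sub>\<plusminus>\<close>. The anti-isometry \<open>T\<^sub>2\<close> commutes with \<open>P\<close>, so it preserves each \<open>E\<^sub>\<plusminus>\<close> and maps positive
  definite subspaces of \<open>E\<^sub>\<plusminus>\<close> bijectively onto negative definite ones of the same dimension:
  each \<open>E\<^sub>\<plusminus>\<close> is neutral. The anti-isometry \<open>T\<^sub>1\<close> anticommutes with \<open>P\<close>, so it is an injection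
  from \<open>E\<^sub>+\<close> into \<open>E\<^sub>-\<close> and back; as \<open>V \<noteq> 0\<close>, neither eigenspace can be trivial.
\<close>

lemma anti_isometry_image_definite:
  fixes B :: "'v::real_vector \<Rightarrow> 'v \<Rightarrow> real"
  assumes "linear T" and "\<forall>v. B (T v) (T v) = - B v v"
  shows pos_definite_on_anti_isometry_image: "pos_definite_on B U \<Longrightarrow> neg_definite_on B (T ` U)"
    and neg_definite_on_anti_isometry_image: "neg_definite_on B U \<Longrightarrow> pos_definite_on B (T ` U)"
  using assms linear_0[OF assms(1)]
  unfolding pos_definite_on_def neg_definite_on_def by force+

lemma neutral_on_if_anti_isometry_invariant:
  fixes B :: "'v::euclidean_space \<Rightarrow> 'v \<Rightarrow> real"
  assumes lin: "linear T" and inj: "inj T" and anti: "\<forall>v. B (T v) (T v) = - B v v"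
    and inv: "T ` W \<subseteq> W"
  shows "neutral_on B W"
proof -
  have image: "subspace (T ` U) \<and> T ` U \<subseteq> W \<and> dim (T ` U) = dim U"
    if "subspace U" "U \<subseteq> W" for U
    using that inv linear_subspace_image[OF lin]
      dim_image_eq[OF lin inj_on_subset[OF inj subset_UNIV]] by blast
  let ?pos = "{dim U | U. subspace U \<and> U \<subseteq> W \<and> pos_definite_on B U}"
  let ?neg = "{dim U | U. subspace U \<and> U \<subseteq> W \<and> neg_definite_on B U}"
  have "?pos \<subseteq> ?neg"
  proof
    fix d assume "d \<in> ?pos"
    then obtain U where "d = dim U" "subspace U" "U \<subseteq> W" "pos_definite_on B U" by blast
    then have "d = dim (T ` U) \<and> subspace (T ` U) \<and> T ` U \<subseteq> W \<and> neg_definite_on B (T ` U)"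
      using image pos_definite_on_anti_isometry_image[of T B, OF lin anti] by simp
    then show "d \<in> ?neg" by blast
  qed
  moreover have "?neg \<subseteq> ?pos"
  proof
    fix d assume "d \<in> ?neg"
    then obtain U where "d = dim U" "subspace U" "U \<subseteq> W" "neg_definite_on B U" by blast
    then have "d = dim (T ` U) \<and> subspace (T ` U) \<and> T ` U \<subseteq> W \<and> pos_definite_on B (T ` U)"
      using image neg_definite_on_anti_isometry_image[of T B, OF lin anti] by simp
    then show "d \<in> ?pos" by blast
  qed
  ultimately show ?thesis unfolding neutral_on_def max_pos_dim_def max_neg_dim_def by simp
qed

lemma involution_eigen_decomposition:
  assumes "involution P"
  shows "\<exists>u w. P u = u \<and> P w = - w \<and> v = u + w"
proof (intro exI conjI)
  have lin: "linear P" and PP: "P (P v) = v" using assms unfolding involution_def by auto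
  show "P ((1/2) *\<^sub>R (v + P v)) = (1/2) *\<^sub>R (v + P v)"
    using PP by (simp add: linear_add[OF lin] linear_scale[OF lin] add.commute)
  show "P ((1/2) *\<^sub>R (v - P v)) = - ((1/2) *\<^sub>R (v - P v))"
    using PP by (simp add: linear_diff[OF lin] linear_scale[OF lin] algebra_simps)
  have "(1/2) *\<^sub>R (v + P v) + (1/2) *\<^sub>R (v - P v) = (1/2) *\<^sub>R ((v + P v) + (v - P v))"
    by (simp only: scaleR_add_right)
  also have "\<dots> = (1/2) *\<^sub>R (2 *\<^sub>R v)" by (simp add: scaleR_2)
  finally show "v = (1/2) *\<^sub>R (v + P v) + (1/2) *\<^sub>R (v - P v)" by simp
qed

lemma isometry_eigenvectors_orthogonal:
  fixes B :: "'v::real_vector \<Rightarrow> 'v \<Rightarrow> real"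
  assumes "bilinear B" and "\<And>u v. B u v = B v u" and "linear P"
    and "\<forall>v. B (P v) (P v) = B v v" and "P u = u" and "P w = - w"
  shows "B u w = 0"
proof -
  have "P (u + w) = u - w" using assms(3,5,6) by (simp add: linear_add)
  then have "B (u - w) (u - w) = B (u + w) (u + w)" using assms(4) by metis
  then show ?thesis
    using assms(1) assms(2)[of w u]
    by (simp add: bilinear_ladd bilinear_radd bilinear_lsub bilinear_rsub algebra_simps)
qed

lemma nondegenerate_on_orthogonal_summand:
  fixes B :: "'v::real_vector \<Rightarrow> 'v \<Rightarrow> real"
  assumes "bilinear B" and "nondegenerate_on B UNIV"
    and sum: "\<forall>v. \<exists>u\<in>E. \<exists>w\<in>F. v = u + w" and orth: "\<forall>u\<in>E. \<forall>w\<in>F. B u w = 0"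
  shows "nondegenerate_on B E"
  unfolding nondegenerate_on_def
proof (intro ballI impI)
  fix x assume "x \<in> E" and x_orth_E: "\<forall>u\<in>E. B x u = 0"
  have "B x v = 0" for v
  proof -
    obtain u w where "u \<in> E" "w \<in> F" "v = u + w" using sum by blast
    then show ?thesis
      using x_orth_E orth \<open>x \<in> E\<close> bilinear_radd[OF assms(1)] by simp
  qed
  then show "x = 0" using assms(2) unfolding nondegenerate_on_def by simp
qed

lemma anticommuting_swaps_eigenspaces:
  assumes "linear T" and "\<forall>v. T (P v) = - P (T v)"
  shows "P v = v \<Longrightarrow> P (T v) = - T v"
    and "P v = - v \<Longrightarrow> P (T v) = T v"
proof -
  have swap: "P (T v) = - T (P v)" using assms(2) by simp
  show "P v = v \<Longrightarrow> P (T v) = - T v" using swap by simp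
  show "P v = - v \<Longrightarrow> P (T v) = T v" using swap linear_neg[OF assms(1)] by simp
qed

lemma commuting_preserves_eigenspaces:
  assumes "linear T" and "\<forall>v. T (P v) = P (T v)"
  shows "T ` {v. P v = v} \<subseteq> {v. P v = v}"
    and "T ` {v. P v = - v} \<subseteq> {v. P v = - v}"
proof -
  have "P (T v) = T (P v)" for v using assms(2) by simp
  then show "T ` {v. P v = v} \<subseteq> {v. P v = v}" "T ` {v. P v = - v} \<subseteq> {v. P v = - v}"
    by (auto simp: linear_neg[OF assms(1)])
qed

lemma summand_nontrivial_if_injective_from_complement:
  fixes E F :: "'v::real_vector set"
  assumes "(UNIV :: 'v set) \<noteq> {0}" and sum: "\<forall>v. \<exists>u\<in>E. \<exists>w\<in>F. v = u + w"
    and "linear T" and "inj T" and "T ` F \<subseteq> E"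
  shows "E \<noteq> {0}"
proof
  assume E0: "E = {0}"
  obtain x :: 'v where "x \<noteq> 0" using assms(1) by auto
  have "x \<in> F" using sum E0 by force
  then have "T x = 0" using assms(5) E0 by blast
  then show False
    using \<open>x \<noteq> 0\<close> assms(3,4) by (metis injD linear_0)
qed

theorem lemma2p14:
  fixes B :: "'v::euclidean_space \<Rightarrow> 'v \<Rightarrow> real"
    and P T1 T2 :: "'v \<Rightarrow> 'v"
  assumes "scalar_product B"
    and "neutral_on B UNIV"
    and "(UNIV :: 'v set) \<noteq> {0}"
    and "involution P" and "isometry B P"
    and "anti_isometry B T1" and "anti_isometry B T2"
    and "\<forall>v. T1 (P v) = - P (T1 v)"
    and "\<forall>v. T2 (P v) = P (T2 v)"
  shows "{v. P v = v} \<noteq> {0} \<and> {v. P v = - v} \<noteq> {0}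
     \<and> nondegenerate_on B {v. P v = v} \<and> neutral_on B {v. P v = v}
     \<and> nondegenerate_on B {v. P v = - v} \<and> neutral_on B {v. P v = - v}"
proof -
  let ?Ep = "{v. P v = v}" and ?Em = "{v. P v = - v}"
  have bil: "bilinear B" and sym: "\<And>u v. B u v = B v u" and nd: "nondegenerate_on B UNIV"
    using assms(1) unfolding scalar_product_def by auto
  have T1: "linear T1" "inj T1" and T2: "linear T2" "inj T2" "\<forall>v. B (T2 v) (T2 v) = - B v v"
    using assms(6,7) unfolding anti_isometry_def bij_def by auto
  have sum: "\<forall>v. \<exists>u\<in>?Ep. \<exists>w\<in>?Em. v = u + w" "\<forall>v. \<exists>u\<in>?Em. \<exists>w\<in>?Ep. v = u + w"
    using involution_eigen_decomposition[OF assms(4)] by (fastforce simp: add.commute)+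
  have linP: "linear P" and isoP: "\<forall>v. B (P v) (P v) = B v v"
    using assms(5) unfolding isometry_def by auto
  have orth_pm: "\<forall>u\<in>?Ep. \<forall>w\<in>?Em. B u w = 0"
    using isometry_eigenvectors_orthogonal[OF bil sym linP isoP] by blast
  then have orth_mp: "\<forall>u\<in>?Em. \<forall>w\<in>?Ep. B u w = 0"
    using sym by metis
  have "T1 ` ?Em \<subseteq> ?Ep" "T1 ` ?Ep \<subseteq> ?Em"
    using anticommuting_swaps_eigenspaces[OF T1(1) assms(8)] by auto
  then have "?Ep \<noteq> {0}" "?Em \<noteq> {0}"
    using summand_nontrivial_if_injective_from_complement[OF assms(3) _ T1] sum by blast+
  moreover have "nondegenerate_on B ?Ep" "nondegenerate_on B ?Em"
    using nondegenerate_on_orthogonal_summand[OF bil nd] sum orth_pm orth_mp by blast+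
  moreover have "neutral_on B ?Ep" "neutral_on B ?Em"
    using neutral_on_if_anti_isometry_invariant[of T2 B, OF T2]
      commuting_preserves_eigenspaces[OF T2(1) assms(9)] by blast+
  ultimately show ?thesis by blast
qed

end
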